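(* Let $\alpha>0$ and let $u$ be a sufficiently smooth solution of the $\alpha$--Euler equations with Dirichlet boundary condition on $\Omega$. Set $v=u-\alpha\Delta u$. Then for every $i\in\{1,\dots,N\}$ the circulation $\int_{\Gamma_i}v\cdot n^\perp$ of $v$ on $\Gamma_i$ is constant in time.
   Context: $\Omega\subset\mathbb R^2$ is a smooth bounded domain with $\partial\Omega=\Gamma\cup\Gamma_1\cup\dots\cup\Gamma_N$, where $\Gamma$ is the outer boundary component and $\Gamma_1,\dots,\Gamma_N$ are the inner components (smooth closed curves). $n$ is the outward unit normal and $n^\perp$ the unit tangent vector. The $\alpha$--Euler equations with Dirichlet boundary condition are $\partial_t(u-\alpha\Delta u)+u\cdot\nabla(u-\alpha\Delta u)+\sum_j(u-\alpha\Delta u)_j\nabla u_j=-\nabla\pi$, $\operatorname{div}u=0$ in $\Omega$, $u|_{\partial\Omega}=0$. *)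

theory Defs
  imports "HOL-Analysis.Analysis"
begin

definition dderiv :: "'a::euclidean_space \<Rightarrow> ('a \<Rightarrow> real) \<Rightarrow> 'a \<Rightarrow> real" where
  "dderiv v f x = deriv (\<lambda>h. f (x + h *\<^sub>R v)) 0"

definition iter_pderiv :: "'a::euclidean_space list \<Rightarrow> ('a \<Rightarrow> real) \<Rightarrow> 'a \<Rightarrow> real" where
  "iter_pderiv ds f = foldr dderiv ds f"

definition smooth_scalar_on :: "'a::euclidean_space set \<Rightarrow> ('a \<Rightarrow> real) \<Rightarrow> bool" where
  "smooth_scalar_on S f \<longleftrightarrow>
     (\<forall>ds \<in> lists Basis. continuous_on S (iter_pderiv ds f) \<and>
        (\<forall>b\<in>Basis. \<forall>x\<in>S. (\<lambda>h. iter_pderiv ds f (x + h *\<^sub>R b)) differentiable (at 0)))"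

definition smooth_on :: "'a::euclidean_space set \<Rightarrow> ('a \<Rightarrow> 'b::euclidean_space) \<Rightarrow> bool" where
  "smooth_on S f \<longleftrightarrow> (\<forall>c\<in>Basis. smooth_scalar_on S (\<lambda>x. f x \<bullet> c))"

type_synonym vfield = "real^2 \<Rightarrow> real^2"

definition pd :: "2 \<Rightarrow> (real^2 \<Rightarrow> real) \<Rightarrow> real^2 \<Rightarrow> real" where
  "pd j f x = dderiv (axis j 1) f x"

definition lap :: "(real^2 \<Rightarrow> real) \<Rightarrow> real^2 \<Rightarrow> real" where
  "lap f x = (\<Sum>j\<in>UNIV. pd j (pd j f) x)"

definition vlap :: "vfield \<Rightarrow> vfield" where
  "vlap w x = (\<chi> k. lap (\<lambda>y. w y $ k) x)"

definition divg :: "vfield \<Rightarrow> real^2 \<Rightarrow> real" where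
  "divg w x = (\<Sum>j\<in>UNIV. pd j (\<lambda>y. w y $ j) x)"

definition pdt :: "(real \<Rightarrow> real^2 \<Rightarrow> real) \<Rightarrow> real \<Rightarrow> real^2 \<Rightarrow> real" where
  "pdt f t x = deriv (\<lambda>s. f s x) t"

definition alpha_v :: "real \<Rightarrow> (real \<Rightarrow> vfield) \<Rightarrow> real \<Rightarrow> vfield" where
  "alpha_v \<alpha> u t x = u t x - \<alpha> *\<^sub>R vlap (u t) x"

definition alpha_euler_solution ::
  "real \<Rightarrow> (real^2) set \<Rightarrow> real \<Rightarrow> (real \<Rightarrow> vfield) \<Rightarrow> (real \<Rightarrow> real^2 \<Rightarrow> real) \<Rightarrow> bool" where
  "alpha_euler_solution \<alpha> \<Omega> T u \<pi> \<longleftrightarrow>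
     (\<exists>U. open U \<and> {0..T} \<times> closure \<Omega> \<subseteq> U \<and>
          smooth_on U (\<lambda>(t,x). u t x) \<and> smooth_on U (\<lambda>(t,x). \<pi> t x)) \<and>
     (\<forall>t\<in>{0<..<T}. \<forall>x\<in>\<Omega>. \<forall>k.
        pdt (\<lambda>s y. alpha_v \<alpha> u s y $ k) t x
        + (\<Sum>j\<in>UNIV. u t x $ j * pd j (\<lambda>y. alpha_v \<alpha> u t y $ k) x)
        + (\<Sum>j\<in>UNIV. alpha_v \<alpha> u t x $ j * pd k (\<lambda>y. u t y $ j) x)
        = - pd k (\<pi> t) x) \<and>
     (\<forall>t\<in>{0<..<T}. \<forall>x\<in>\<Omega>. divg (u t) x = 0) \<and>
     (\<forall>t\<in>{0..T}. \<forall>x\<in>frontier \<Omega>. u t x = 0)"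

definition smooth_closed_curve :: "(real \<Rightarrow> real^2) \<Rightarrow> bool" where
  "smooth_closed_curve \<gamma> \<longleftrightarrow>
     smooth_on UNIV \<gamma> \<and> (\<forall>s. \<gamma> (s + 1) = \<gamma> s) \<and> inj_on \<gamma> {0..<1} \<and>
     (\<forall>s. vector_derivative \<gamma> (at s) \<noteq> 0)"

definition circulation :: "vfield \<Rightarrow> (real \<Rightarrow> real^2) \<Rightarrow> real" where
  "circulation w \<gamma> = integral {0..1} (\<lambda>s. w (\<gamma> s) \<bullet> vector_derivative \<gamma> (at s))"

text \<open>Omega is a smooth bounded domain whose boundary consists of the outer component
  path_image (gamma 0) and the inner components path_image (gamma i), 1 <= i <= N.\<close>
definition smooth_multiply_connected_domain ::
  "(real^2) set \<Rightarrow> nat \<Rightarrow> (nat \<Rightarrow> real \<Rightarrow> real^2) \<Rightarrow> bool" where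
  "smooth_multiply_connected_domain \<Omega> N \<gamma> \<longleftrightarrow>
     open \<Omega> \<and> connected \<Omega> \<and> bounded \<Omega> \<and>
     (\<forall>i\<le>N. smooth_closed_curve (\<gamma> i)) \<and>
     (\<forall>i\<le>N. \<forall>j\<le>N. i \<noteq> j \<longrightarrow> path_image (\<gamma> i) \<inter> path_image (\<gamma> j) = {}) \<and>
     frontier \<Omega> = (\<Union>i\<le>N. path_image (\<gamma> i)) \<and>
     \<Omega> \<subseteq> inside (path_image (\<gamma> 0)) \<and>
     (\<forall>i\<in>{1..N}. \<Omega> \<subseteq> outside (path_image (\<gamma> i)))"

end

theory Submission
  imports Defs
begin

text \<open>
  On an inner boundary curve \<open>\<Gamma>\<^sub>i\<close> the velocity vanishes at all times. Hence at points of
  \<open>\<Gamma>\<^sub>i\<close> the transport term \<open>u \<cdot> \<nabla>v\<close> disappears, and so does the tangential derivative of each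
  component \<open>u\<^sub>j\<close>, which kills \<open>\<Sum>\<^sub>j v\<^sub>j \<nabla>u\<^sub>j\<close> after taking the tangential component.
  The momentum equation, which extends to the boundary by continuity, therefore gives
  \<open>\<partial>\<^sub>t v \<cdot> \<gamma>' = - \<nabla>\<pi> \<cdot> \<gamma>'\<close> along \<open>\<Gamma>\<^sub>i\<close>. Differentiating the circulation under the integral
  sign, its time derivative is the circulation of the gradient \<open>-\<nabla>\<pi>\<close> around a closed curve,
  which vanishes.
\<close>

section \<open>Smooth functions\<close>

lemma iter_pderiv_Nil [simp]: "iter_pderiv [] F = F"
  by (simp add: iter_pderiv_def)

lemma iter_pderiv_Cons [simp]: "iter_pderiv (b # ds) F = dderiv b (iter_pderiv ds F)"
  by (simp add: iter_pderiv_def)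

lemma iter_pderiv_append: "iter_pderiv (ds @ es) F = iter_pderiv ds (iter_pderiv es F)"
  by (simp add: iter_pderiv_def)

lemma smooth_scalar_on_iter_pderiv:
  assumes "smooth_scalar_on U F" "set ds \<subseteq> Basis"
  shows "smooth_scalar_on U (iter_pderiv ds F)"
proof -
  have "dsa @ ds \<in> lists Basis" if "dsa \<in> lists Basis" for dsa
    using that assms(2) by auto
  then show ?thesis
    using assms(1) unfolding smooth_scalar_on_def iter_pderiv_append[symmetric] by blast
qed

lemma smooth_scalar_on_dderiv:
  "smooth_scalar_on U F \<Longrightarrow> b \<in> Basis \<Longrightarrow> smooth_scalar_on U (dderiv b F)"
  using smooth_scalar_on_iter_pderiv[of U F "[b]"] by simp

lemma smooth_scalar_on_imp_continuous_on: "smooth_scalar_on U F \<Longrightarrow> continuous_on U F"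
  unfolding smooth_scalar_on_def by (metis iter_pderiv_Nil lists.Nil)

lemma smooth_scalar_on_has_dderiv:
  assumes "smooth_scalar_on U F" "x \<in> U" "b \<in> Basis"
  shows "((\<lambda>h. F (x + h *\<^sub>R b)) has_field_derivative dderiv b F x) (at 0)"
proof -
  have "(\<lambda>h. F (x + h *\<^sub>R b)) differentiable (at 0)"
    using assms unfolding smooth_scalar_on_def by (metis iter_pderiv_Nil lists.Nil)
  then show ?thesis
    unfolding dderiv_def by (simp add: DERIV_deriv_iff_real_differentiable)
qed

lemma eventually_nhds_line_in_open:
  fixes x b :: "'a::real_normed_vector"
  assumes "open U" "x \<in> U"
  shows "eventually (\<lambda>h. x + h *\<^sub>R b \<in> U) (nhds 0)"
proof -
  have "open ((\<lambda>h. x + h *\<^sub>R b) -` U)"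
    by (intro continuous_open_vimage assms(1) continuous_intros)
  then show ?thesis
    unfolding eventually_nhds using assms(2) by (intro exI[of _ "(\<lambda>h. x + h *\<^sub>R b) -` U"]) auto
qed

lemma dderiv_cong_open:
  assumes "open U" "x \<in> U" "\<And>y. y \<in> U \<Longrightarrow> F y = G y"
  shows "dderiv b F x = dderiv b G x"
  unfolding dderiv_def
  by (rule deriv_cong_ev[OF eventually_mono[OF eventually_nhds_line_in_open[OF assms(1,2)]]])
     (use assms(3) in auto)

lemma iter_pderiv_lincomb:
  assumes U: "open U" and f: "smooth_scalar_on U f" and g: "smooth_scalar_on U g"
    and "set ds \<subseteq> Basis" "x \<in> U"
  shows "iter_pderiv ds (\<lambda>y. a * f y + c * g y) x = a * iter_pderiv ds f x + c * iter_pderiv ds g x"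
  using assms(4,5)
proof (induction ds arbitrary: x)
  case (Cons b ds)
  have "dderiv b (iter_pderiv ds (\<lambda>y. a * f y + c * g y)) x
      = dderiv b (\<lambda>y. a * iter_pderiv ds f y + c * iter_pderiv ds g y) x"
    by (rule dderiv_cong_open[OF U \<open>x \<in> U\<close>]) (use Cons in auto)
  also have "\<dots> = a * dderiv b (iter_pderiv ds f) x + c * dderiv b (iter_pderiv ds g) x"
    unfolding dderiv_def[of b "\<lambda>y. _ y + _ y"]
    by (intro DERIV_imp_deriv DERIV_add DERIV_cmult smooth_scalar_on_has_dderiv
          smooth_scalar_on_iter_pderiv) (use Cons f g in auto)
  finally show ?case by simp
qed simp

lemma smooth_scalar_on_lincomb:
  assumes U: "open U" and f: "smooth_scalar_on U f" and g: "smooth_scalar_on U g"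
  shows "smooth_scalar_on U (\<lambda>y. a * f y + c * g y)"
  unfolding smooth_scalar_on_def
proof (intro ballI conjI)
  fix ds :: "'a list" assume "ds \<in> lists Basis"
  then have ds: "set ds \<subseteq> Basis" by auto
  note eq = iter_pderiv_lincomb[OF U f g ds]
  note [continuous_intros] = smooth_scalar_on_imp_continuous_on[OF smooth_scalar_on_iter_pderiv[OF _ ds]]
  show "continuous_on U (iter_pderiv ds (\<lambda>y. a * f y + c * g y))"
    using eq by (subst continuous_on_cong[OF refl]) (auto intro!: continuous_intros f g)
  fix b x :: 'a assume b: "b \<in> Basis" and x: "x \<in> U"
  have "((\<lambda>h. iter_pderiv ds (\<lambda>y. a * f y + c * g y) (x + h *\<^sub>R b)) has_field_derivative
        a * dderiv b (iter_pderiv ds f) x + c * dderiv b (iter_pderiv ds g) x) (at 0)"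
  proof (subst DERIV_cong_ev[OF refl _ refl])
    show "eventually (\<lambda>h. iter_pderiv ds (\<lambda>y. a * f y + c * g y) (x + h *\<^sub>R b)
        = a * iter_pderiv ds f (x + h *\<^sub>R b) + c * iter_pderiv ds g (x + h *\<^sub>R b)) (nhds 0)"
      by (rule eventually_mono[OF eventually_nhds_line_in_open[OF U x]]) (use eq in auto)
  qed (intro DERIV_add DERIV_cmult smooth_scalar_on_has_dderiv[OF _ x b] smooth_scalar_on_iter_pderiv f g ds)
  then show "(\<lambda>h. iter_pderiv ds (\<lambda>y. a * f y + c * g y) (x + h *\<^sub>R b)) differentiable (at 0)"
    by (auto simp: real_differentiable_def)
qed

lemma smooth_on_vec_iff:
  fixes f :: "'a::euclidean_space \<Rightarrow> real^'n"
  shows "smooth_on U f \<longleftrightarrow> (\<forall>k. smooth_scalar_on U (\<lambda>x. f x $ k))"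
  by (auto simp: smooth_on_def Basis_vec_def cart_eq_inner_axis)

lemma smooth_on_real_iff:
  fixes f :: "'a::euclidean_space \<Rightarrow> real"
  shows "smooth_on U f \<longleftrightarrow> smooth_scalar_on U f"
  by (simp add: smooth_on_def)

section \<open>Time slices of functions on space-time\<close>

lemma space_axis_in_Basis: "(0::real, axis j (1::real)) \<in> (Basis :: (real \<times> (real^'n)) set)"
  by (auto simp: Basis_prod_def Basis_vec_def)

lemma time_unit_in_Basis: "(1::real, 0::real^'n) \<in> Basis"
  by (auto simp: Basis_prod_def)

lemma pd_eq_dderiv: "pd j (\<lambda>y. G (t, y)) x = dderiv (0, axis j 1) G (t, x)"
  unfolding pd_def dderiv_def by simp

lemma pdt_eq_dderiv: "pdt (\<lambda>s y. G (s, y)) t x = dderiv (1, 0) G (t, x)"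
proof -
  have "((\<lambda>s. G (s, x)) has_field_derivative D) (at t) \<longleftrightarrow>
        ((\<lambda>h. G ((t, x) + h *\<^sub>R (1, 0))) has_field_derivative D) (at 0)" for D
    using DERIV_shift[of "\<lambda>s. G (s, x)" D 0 t] by (simp add: add.commute)
  then show ?thesis unfolding pdt_def dderiv_def deriv_def by simp
qed

lemma smooth_scalar_on_pd:
  fixes G :: "real \<times> (real^2) \<Rightarrow> real"
  assumes "smooth_scalar_on U G"
  shows "smooth_scalar_on U (\<lambda>(t, x). pd j (\<lambda>y. G (t, y)) x)"
  using smooth_scalar_on_dderiv[OF assms space_axis_in_Basis] by (simp add: pd_eq_dderiv split_beta)

lemma smooth_scalar_on_pdt:
  fixes G :: "real \<times> (real^2) \<Rightarrow> real"
  assumes "smooth_scalar_on U G"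
  shows "smooth_scalar_on U (\<lambda>(t, x). pdt (\<lambda>s y. G (s, y)) t x)"
  using smooth_scalar_on_dderiv[OF assms time_unit_in_Basis] by (simp add: pdt_eq_dderiv split_beta)

lemma has_field_derivative_pdt:
  fixes G :: "real \<times> (real^2) \<Rightarrow> real"
  assumes "smooth_scalar_on U G" "(t, x) \<in> U"
  shows "((\<lambda>s. G (s, x)) has_field_derivative pdt (\<lambda>s y. G (s, y)) t x) (at t)"
proof -
  have "((\<lambda>h. G (h + t, x)) has_field_derivative pdt (\<lambda>s y. G (s, y)) t x) (at 0)"
    using smooth_scalar_on_has_dderiv[OF assms time_unit_in_Basis]
    by (simp add: pdt_eq_dderiv add.commute)
  then show ?thesis using DERIV_shift[of "\<lambda>s. G (s, x)" _ 0 t] by simp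
qed

lemma open_slice:
  fixes U :: "('a::topological_space \<times> 'b::topological_space) set"
  assumes "open U"
  shows "open {y. (t, y) \<in> U}"
proof -
  have "open ((\<lambda>y. (t, y)) -` U)"
    by (rule open_vimage[OF assms]) (intro continuous_intros)
  then show ?thesis by (simp add: vimage_def)
qed

lemma continuous_on_slice:
  assumes "continuous_on U G" "\<And>y. y \<in> S \<Longrightarrow> (t, y) \<in> U"
  shows "continuous_on S (\<lambda>y. G (t, y))"
  by (rule continuous_on_compose2[OF assms(1)])
     (use assms(2) in \<open>auto intro!: continuous_on_Pair continuous_on_const continuous_on_id\<close>)

section \<open>Continuously differentiable functions on the plane\<close>

definition C1_on :: "(real^2) set \<Rightarrow> (real^2 \<Rightarrow> real) \<Rightarrow> bool" where
  "C1_on S g \<longleftrightarrow>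
     (\<forall>j. continuous_on S (pd j g) \<and> (\<forall>y\<in>S. (\<lambda>h. g (y + h *\<^sub>R axis j 1)) differentiable (at 0)))"

definition grad :: "(real^2 \<Rightarrow> real) \<Rightarrow> real^2 \<Rightarrow> real^2" where
  "grad g x = (\<chi> j. pd j g x)"

lemma C1_on_slice:
  fixes G :: "real \<times> (real^2) \<Rightarrow> real"
  assumes "smooth_scalar_on U G"
  shows "C1_on {y. (t, y) \<in> U} (\<lambda>y. G (t, y))"
  unfolding C1_on_def
proof (intro allI conjI ballI)
  fix j
  have "continuous_on U (\<lambda>(t, x). pd j (\<lambda>y. G (t, y)) x)"
    by (rule smooth_scalar_on_imp_continuous_on[OF smooth_scalar_on_pd[OF assms]])
  then have "continuous_on {y. (t, y) \<in> U} (\<lambda>y. (\<lambda>(s, x). pd j (\<lambda>z. G (s, z)) x) (t, y))"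
    by (rule continuous_on_slice) simp
  then show "continuous_on {y. (t, y) \<in> U} (pd j (\<lambda>y. G (t, y)))"
    by simp
  fix y assume "y \<in> {y. (t, y) \<in> U}"
  then show "(\<lambda>h. G (t, y + h *\<^sub>R axis j 1)) differentiable (at 0)"
    using smooth_scalar_on_has_dderiv[OF assms _ space_axis_in_Basis, of "(t, y)" j]
    by (auto simp: real_differentiable_def)
qed

lemma C1_on_has_pd:
  assumes "C1_on S g" "y \<in> S"
  shows "((\<lambda>h. g (y + h *\<^sub>R axis j 1)) has_field_derivative pd j g y) (at 0)"
  using assms unfolding C1_on_def pd_def dderiv_def by (simp add: DERIV_deriv_iff_real_differentiable)

definition vec2 :: "real \<Rightarrow> real \<Rightarrow> real^2" where
  "vec2 a b = a *\<^sub>R axis 1 1 + b *\<^sub>R axis 2 1"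

lemma vec2_nth_eta [simp]: "vec2 (y $ 1) (y $ 2) = y"
  unfolding vec2_def by (simp add: vec_eq_iff axis_def) (metis exhaust_2)

lemma vec2_add_axis:
  "vec2 a b + h *\<^sub>R axis 1 1 = vec2 (h + a) b" "vec2 a b + h *\<^sub>R axis 2 1 = vec2 a (h + b)"
  unfolding vec2_def by (simp_all add: algebra_simps)

lemma continuous_on_vec2 [continuous_intros]:
  "continuous_on S f \<Longrightarrow> continuous_on S g \<Longrightarrow> continuous_on S (\<lambda>x. vec2 (f x) (g x))"
  unfolding vec2_def by (intro continuous_intros)

lemma vec2_in_ball:
  assumes "a \<in> ball (x $ 1) (r / 2)" "b \<in> ball (x $ 2) (r / 2)"
  shows "vec2 a b \<in> ball x r"
proof -
  have "norm (vec2 a b - x) \<le> \<bar>a - x $ 1\<bar> + \<bar>b - x $ 2\<bar>"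
    using norm_le_l1_cart[of "vec2 a b - x"] by (simp add: sum_2 vec2_def axis_def)
  also have "\<dots> < r"
    using assms by (simp add: dist_real_def abs_minus_commute)
  finally show ?thesis by (simp add: dist_norm norm_minus_commute)
qed

lemma has_derivative_C1_on_vec2:
  fixes g :: "real^2 \<Rightarrow> real"
  assumes S: "open S" and g: "C1_on S g" and x: "x \<in> S"
  shows "((\<lambda>(a, b). g (vec2 a b)) has_derivative (\<lambda>(ha, hb). ha * pd 1 g x + hb * pd 2 g x))
           (at (x $ 1, x $ 2))"
proof -
  \<comment> \<open>Only the second partial derivative has to be continuous near \<open>x\<close>, as in
     \<open>has_derivative_partialsI\<close>.\<close>
  obtain r where r: "r > 0" "ball x r \<subseteq> S"
    using S x open_contains_ball by blast
  define X Y where "X = ball (x $ 1) (r / 2)" and "Y = ball (x $ 2) (r / 2)"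
  have in_S: "vec2 a b \<in> S" if "a \<in> X" "b \<in> Y" for a b
    using vec2_in_ball[of a x r b] that r(2) by (auto simp: X_def Y_def)
  have x12: "x $ 1 \<in> X" "x $ 2 \<in> Y"
    using r by (auto simp: X_def Y_def)
  have d1: "((\<lambda>a. g (vec2 a b)) has_field_derivative pd 1 g (vec2 a b)) (at a)" if "vec2 a b \<in> S" for a b
    using C1_on_has_pd[OF g that, of 1] DERIV_shift[of "\<lambda>a. g (vec2 a b)" _ 0 a]
    by (simp add: vec2_add_axis)
  have d2: "((\<lambda>b. g (vec2 a b)) has_field_derivative pd 2 g (vec2 a b)) (at b)" if "vec2 a b \<in> S" for a b
    using C1_on_has_pd[OF g that, of 2] DERIV_shift[of "\<lambda>b. g (vec2 a b)" _ 0 b]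
    by (simp add: vec2_add_axis)
  have "continuous_on (X \<times> Y) (\<lambda>p. pd 2 g (vec2 (fst p) (snd p)))"
  proof (rule continuous_on_compose2[of S])
    show "continuous_on S (pd 2 g)" using g by (simp add: C1_on_def)
    show "continuous_on (X \<times> Y) (\<lambda>p. vec2 (fst p) (snd p))" by (intro continuous_intros)
  qed (auto intro: in_S)
  then have cont_fy: "continuous_on (X \<times> Y) (\<lambda>(a, b). blinfun_mult_right (pd 2 g (vec2 a b)))"
    unfolding split_beta
    by (rule continuous_on_compose2[OF linear_continuous_on[OF bounded_linear_blinfun_mult_right]]) auto
  have "((\<lambda>(a, b). g (vec2 a b)) has_derivative
      (\<lambda>(ha, hb). ha * pd 1 g x + blinfun_mult_right (pd 2 g (vec2 (x $ 1) (x $ 2))) hb))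
      (at (x $ 1, x $ 2) within X \<times> Y)"
  proof (rule has_derivative_partialsI[where f="\<lambda>a b. g (vec2 a b)" and fx="\<lambda>ha. ha * pd 1 g x"
      and fy="\<lambda>a b. blinfun_mult_right (pd 2 g (vec2 a b))"])
    have "((\<lambda>a. g (vec2 a (x $ 2))) has_field_derivative pd 1 g x) (at (x $ 1))"
      using d1[of "x $ 1" "x $ 2"] x by simp
    then show "((\<lambda>a. g (vec2 a (x $ 2))) has_derivative (\<lambda>ha. ha * pd 1 g x)) (at (x $ 1) within X)"
      unfolding has_field_derivative_def mult_commute_abs[of "pd 1 g x", symmetric]
      by (rule has_derivative_at_withinI)
    show "((\<lambda>b. g (vec2 a b)) has_derivative blinfun_mult_right (pd 2 g (vec2 a b))) (at b within Y)"
      if "a \<in> X" "b \<in> Y" for a b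
      using d2[OF in_S[OF that]]
      unfolding has_field_derivative_def blinfun_mult_right.rep_eq mult_commute_abs[of "pd 2 g (vec2 a b)", symmetric]
      by (rule has_derivative_at_withinI)
    show "continuous (at (x $ 1, x $ 2) within X \<times> Y) (\<lambda>(a, b). blinfun_mult_right (pd 2 g (vec2 a b)))"
      using cont_fy x12 unfolding continuous_on_eq_continuous_within by blast
  qed (use x12 in \<open>simp_all add: Y_def\<close>)
  then show ?thesis
    using x12 at_within_open[of "(x $ 1, x $ 2)" "X \<times> Y"]
    by (simp add: open_Times X_def Y_def mult.commute[of "pd 2 g x"])
qed

lemma has_derivative_C1_on:
  fixes g :: "real^2 \<Rightarrow> real"
  assumes "open S" "C1_on S g" "x \<in> S"
  shows "(g has_derivative (\<lambda>h. h \<bullet> grad g x)) (at x)"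
proof -
  have "((\<lambda>y. (y $ 1, y $ 2)) has_derivative (\<lambda>h. (h $ 1, h $ 2))) (at x)"
    by (intro has_derivative_Pair bounded_linear_imp_has_derivative bounded_linear_vec_nth)
  then have "((\<lambda>(a, b). g (vec2 a b)) \<circ> (\<lambda>y. (y $ 1, y $ 2)) has_derivative
      (\<lambda>(ha, hb). ha * pd 1 g x + hb * pd 2 g x) \<circ> (\<lambda>h. (h $ 1, h $ 2))) (at x)"
    by (rule diff_chain_at) (simp add: has_derivative_C1_on_vec2[OF assms])
  then show ?thesis
    by (simp add: o_def grad_def inner_vec_def sum_2 mult.commute)
qed

lemma has_field_derivative_C1_on_comp:
  assumes "open S" "C1_on S g" "c s \<in> S" and c: "(c has_vector_derivative c') (at s)"
  shows "((\<lambda>s. g (c s)) has_field_derivative c' \<bullet> grad g (c s)) (at s)"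
proof -
  have "(g \<circ> c has_derivative (\<lambda>h. (h *\<^sub>R c') \<bullet> grad g (c s))) (at s)"
    using diff_chain_at[OF c[unfolded has_vector_derivative_def] has_derivative_C1_on[OF assms(1-3)]]
    by (simp add: o_def)
  then show ?thesis
    by (simp add: has_field_derivative_def o_def mult_commute_abs)
qed

lemma C1_on_tangential_derivative_eq_0:
  assumes "open S" "C1_on S g" "c s \<in> S" "(c has_vector_derivative c') (at s)"
    and "\<And>s. g (c s) = 0"
  shows "c' \<bullet> grad g (c s) = 0"
proof -
  have "((\<lambda>s. g (c s)) has_field_derivative c' \<bullet> grad g (c s)) (at s)"
    by (rule has_field_derivative_C1_on_comp[OF assms(1-4)])
  then have "((\<lambda>s. 0) has_field_derivative c' \<bullet> grad g (c s)) (at s)"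
    by (simp add: assms(5))
  then show ?thesis
    using DERIV_const DERIV_unique by blast
qed

section \<open>Circulation along closed curves\<close>

lemma has_vector_derivative_vec_lambda:
  fixes f :: "real \<Rightarrow> real^'n"
  assumes "\<And>k. ((\<lambda>s. f s $ k) has_field_derivative D k) (at s)"
  shows "(f has_vector_derivative (\<chi> k. D k)) (at s)"
  unfolding has_vector_derivative_def
proof (subst has_derivative_componentwise_within, intro ballI)
  fix i :: "real^'n" assume "i \<in> Basis"
  then obtain k where i: "i = axis k 1" by (auto simp: Basis_vec_def)
  show "((\<lambda>s. f s \<bullet> i) has_derivative (\<lambda>h. h *\<^sub>R (\<chi> k. D k) \<bullet> i)) (at s)"
    using assms[of k] unfolding i has_field_derivative_def
    by (simp add: cart_eq_inner_axis[symmetric] mult_commute_abs)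
qed

lemma smooth_curve_vector_derivative:
  fixes \<gamma> :: "real \<Rightarrow> real^'n"
  assumes "smooth_on UNIV \<gamma>"
  shows "(\<gamma> has_vector_derivative vector_derivative \<gamma> (at s)) (at s)"
    and "continuous_on UNIV (\<lambda>s. vector_derivative \<gamma> (at s))"
proof -
  define d where "d k = dderiv 1 (\<lambda>s. \<gamma> s $ k)" for k
  have sm: "smooth_scalar_on UNIV (\<lambda>s. \<gamma> s $ k)" for k
    using assms by (simp add: smooth_on_vec_iff)
  have "((\<lambda>s. \<gamma> s $ k) has_field_derivative d k s) (at s)" for k s
    using smooth_scalar_on_has_dderiv[OF sm, of s 1] DERIV_shift[of "\<lambda>s. \<gamma> s $ k" _ 0 s]
    by (simp add: d_def add.commute)
  then have D: "(\<gamma> has_vector_derivative (\<chi> k. d k s)) (at s)" for s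
    by (rule has_vector_derivative_vec_lambda)
  then show "(\<gamma> has_vector_derivative vector_derivative \<gamma> (at s)) (at s)"
    by (rule vector_derivative_works[THEN iffD1, OF differentiableI_vector])
  have "continuous_on UNIV (d k)" for k
    unfolding d_def by (rule smooth_scalar_on_imp_continuous_on[OF smooth_scalar_on_dderiv[OF sm]]) simp
  then have "continuous_on UNIV (\<lambda>s. \<chi> k. d k s)"
    by (intro continuous_on_vec_lambda)
  then show "continuous_on UNIV (\<lambda>s. vector_derivative \<gamma> (at s))"
    using vector_derivative_at[OF D] by simp
qed

lemma periodic_range_eq:
  fixes g :: "real \<Rightarrow> 'a"
  assumes per: "\<And>s. g (s + 1) = g s"
  shows "range g = g ` {0..1}"
proof -
  have shift: "g (s + real n) = g s" for s n
  proof (induction n)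
    case (Suc n)
    have "s + real (Suc n) = (s + real n) + 1" by simp
    then show ?case using per[of "s + real n"] Suc.IH by metis
  qed simp
  have "g s = g (frac s)" for s
  proof (cases "\<lfloor>s\<rfloor> \<ge> 0")
    case True
    then have "s = frac s + real (nat \<lfloor>s\<rfloor>)" by (simp add: frac_def)
    then show ?thesis using shift[of "frac s" "nat \<lfloor>s\<rfloor>"] by simp
  next
    case False
    then have "frac s = s + real (nat (- \<lfloor>s\<rfloor>))" by (simp add: frac_def)
    then show ?thesis using shift[of s "nat (- \<lfloor>s\<rfloor>)"] by simp
  qed
  moreover have "frac s \<in> {0..1}" for s :: real
    using frac_lt_1[of s] by (simp add: less_imp_le)
  ultimately show ?thesis by blast
qed

lemma circulation_grad_closed_curve:
  assumes S: "open S" "C1_on S g" and \<gamma>: "smooth_on UNIV \<gamma>" "range \<gamma> \<subseteq> S" "\<gamma> 1 = \<gamma> 0"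
  shows "circulation (grad g) \<gamma> = 0"
proof -
  have "((\<lambda>s. grad g (\<gamma> s) \<bullet> vector_derivative \<gamma> (at s)) has_integral g (\<gamma> 1) - g (\<gamma> 0)) {0..1}"
  proof (rule fundamental_theorem_of_calculus)
    fix s :: real
    have "((\<lambda>s. g (\<gamma> s)) has_field_derivative vector_derivative \<gamma> (at s) \<bullet> grad g (\<gamma> s)) (at s)"
      using \<gamma>(2) by (intro has_field_derivative_C1_on_comp[OF S] smooth_curve_vector_derivative(1)[OF \<gamma>(1)]) auto
    then show "((\<lambda>s. g (\<gamma> s)) has_vector_derivative grad g (\<gamma> s) \<bullet> vector_derivative \<gamma> (at s))
        (at s within {0..1})"
      by (simp add: has_real_derivative_iff_has_vector_derivative[symmetric] inner_commute
          has_field_derivative_at_within)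
  qed simp
  then show ?thesis
    using \<gamma>(3) unfolding circulation_def by (simp add: integral_unique)
qed

lemma continuous_on_along_curve:
  assumes "continuous_on U G" "continuous_on UNIV \<gamma>" "\<And>t s. t \<in> A \<Longrightarrow> (t, \<gamma> s) \<in> U"
  shows "continuous_on (A \<times> B) (\<lambda>p. G (fst p, \<gamma> (snd p)))"
proof (rule continuous_on_compose2[OF assms(1)])
  have "continuous_on (A \<times> B) (\<lambda>p. \<gamma> (snd p))"
    by (rule continuous_on_compose2[OF assms(2) continuous_on_snd[OF continuous_on_id]]) simp
  then show "continuous_on (A \<times> B) (\<lambda>p. (fst p, \<gamma> (snd p)))"
    by (intro continuous_on_Pair continuous_on_fst continuous_on_id)
qed (use assms(3) in auto)

lemma has_field_derivative_circulation:
  fixes W :: "real \<Rightarrow> real^2 \<Rightarrow> real^2"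
  assumes W: "smooth_on U (\<lambda>(t, x). W t x)" and \<gamma>: "smooth_on UNIV \<gamma>"
    and U: "\<And>t s. t \<in> {a..b} \<Longrightarrow> (t, \<gamma> s) \<in> U" and t: "t \<in> {a..b}"
  shows "((\<lambda>t. circulation (W t) \<gamma>) has_field_derivative
           circulation (\<lambda>x. \<chi> k. pdt (\<lambda>s y. W s y $ k) t x) \<gamma>) (at t within {a..b})"
proof -
  define \<gamma>' where "\<gamma>' s = vector_derivative \<gamma> (at s)" for s
  define Wt where "Wt k = (\<lambda>(t, x). pdt (\<lambda>s y. W s y $ k) t x)" for k
  define f where "f t s = (\<Sum>k\<in>UNIV. W t (\<gamma> s) $ k * \<gamma>' s $ k)" for t s
  define f' where "f' t s = (\<Sum>k\<in>UNIV. Wt k (t, \<gamma> s) * \<gamma>' s $ k)" for t s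
  have Wk: "smooth_scalar_on U (\<lambda>(t, x). W t x $ k)" for k
    using W by (simp add: smooth_on_vec_iff case_prod_unfold)
  have cont_\<gamma>: "continuous_on UNIV \<gamma>"
    using smooth_curve_vector_derivative(1)[OF \<gamma>]
    by (meson continuous_at_imp_continuous_on has_vector_derivative_continuous)
  have cont_\<gamma>': "continuous_on ({a..b} \<times> {0..1}) (\<lambda>p. \<gamma>' (snd p) $ k)" for k
    using continuous_on_compose2[OF smooth_curve_vector_derivative(2)[OF \<gamma>]
        continuous_on_snd[OF continuous_on_id], of "{a..b} \<times> {0..1}"]
    unfolding \<gamma>'_def by (intro continuous_on_component) simp
  have "continuous_on ({a..b} \<times> {0..1}) (\<lambda>p. W (fst p) (\<gamma> (snd p)) $ k)" for k
    using continuous_on_along_curve[where A="{a..b}" and B="{0..1}",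
        OF smooth_scalar_on_imp_continuous_on[OF Wk] cont_\<gamma> U] by simp
  then have cont_f: "continuous_on ({a..b} \<times> {0..1}) (\<lambda>p. f (fst p) (snd p))"
    unfolding f_def by (intro continuous_on_sum continuous_on_mult cont_\<gamma>')
  have "continuous_on ({a..b} \<times> {0..1}) (\<lambda>p. Wt k (fst p, \<gamma> (snd p)))" for k
    unfolding Wt_def
    by (rule continuous_on_along_curve[where A="{a..b}" and B="{0..1}",
          OF smooth_scalar_on_imp_continuous_on[OF smooth_scalar_on_pdt[OF Wk, simplified]] cont_\<gamma> U])
  then have cont_f': "continuous_on ({a..b} \<times> {0..1}) (\<lambda>p. f' (fst p) (snd p))"
    unfolding f'_def by (intro continuous_on_sum continuous_on_mult cont_\<gamma>')
  have "((\<lambda>t. integral (cbox 0 1) (f t)) has_field_derivative integral (cbox 0 1) (f' t))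
      (at t within {a..b})"
  proof (rule leibniz_rule_field_derivative)
    fix t' s assume t': "t' \<in> {a..b}"
    have "((\<lambda>t. W t (\<gamma> s) $ k) has_field_derivative Wt k (t', \<gamma> s)) (at t')" for k
      using has_field_derivative_pdt[OF Wk U[OF t']] by (simp add: Wt_def)
    then have "((\<lambda>t. f t s) has_field_derivative f' t' s) (at t')"
      unfolding f_def f'_def by (intro DERIV_sum DERIV_cmult_right)
    then show "((\<lambda>t. f t s) has_field_derivative f' t' s) (at t' within {a..b})"
      by (rule has_field_derivative_at_within)
  next
    fix t' assume "t' \<in> {a..b}"
    have "continuous_on {0..1} (\<lambda>s. (t', s))"
      by (intro continuous_on_Pair continuous_on_const continuous_on_id)
    then have "continuous_on {0..1} (\<lambda>s. f (fst (t', s)) (snd (t', s)))"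
      by (rule continuous_on_compose2[OF cont_f]) (use \<open>t' \<in> {a..b}\<close> in auto)
    then show "f t' integrable_on cbox 0 1"
      by (simp add: integrable_continuous_real)
  next
    show "continuous_on ({a..b} \<times> cbox 0 1) (\<lambda>(t, s). f' t s)"
      using cont_f' by (simp add: case_prod_unfold)
  qed (use t in auto)
  then show ?thesis
    unfolding circulation_def f_def f'_def \<gamma>'_def Wt_def by (simp add: inner_vec_def)
qed

lemma has_field_derivative_zero_interior_const:
  fixes f :: "real \<Rightarrow> real"
  assumes f: "\<And>t. t \<in> {a..b} \<Longrightarrow> (f has_field_derivative f' t) (at t within {a..b})"
    and f'0: "\<And>t. t \<in> {a<..<b} \<Longrightarrow> f' t = 0" and t: "t \<in> {a..b}"
  shows "f t = f a"
proof (cases "t = a")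
  case False
  with t have "a < t" by simp
  then show ?thesis
  proof (rule DERIV_isconst_end)
    have "continuous_on {a..b} f"
      using f by (meson DERIV_continuous continuous_on_eq_continuous_within)
    then show "continuous_on {a..t} f"
      by (rule continuous_on_subset) (use t in auto)
    fix x assume "a < x" "x < t"
    with t have x: "x \<in> {a<..<b}" by simp
    have "at x within {a..b} = at x"
      by (rule at_within_Icc_at) (use x in auto)
    then show "(f has_field_derivative 0) (at x)"
      using f[of x] f'0[OF x] x by simp
  qed
qed simp

section \<open>Circulation for the \<alpha>-Euler equations\<close>

lemma inner_tangential_balance:
  fixes a v p \<tau> :: "real^'n" and Du :: "'n \<Rightarrow> 'n \<Rightarrow> real"
  assumes eq: "\<And>k. a $ k + (\<Sum>j\<in>UNIV. v $ j * Du j k) = - p $ k"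
    and tangential: "\<And>j. (\<Sum>k\<in>UNIV. \<tau> $ k * Du j k) = 0"
  shows "a \<bullet> \<tau> = - (\<tau> \<bullet> p)"
proof -
  have "a \<bullet> \<tau> = (\<Sum>k\<in>UNIV. - (\<tau> $ k * p $ k) - \<tau> $ k * (\<Sum>j\<in>UNIV. v $ j * Du j k))"
    unfolding inner_vec_def inner_real_def
  proof (rule sum.cong[OF refl])
    fix k
    have a_k: "a $ k = - p $ k - (\<Sum>j\<in>UNIV. v $ j * Du j k)"
      using eq[of k] by linarith
    show "a $ k * \<tau> $ k = - (\<tau> $ k * p $ k) - \<tau> $ k * (\<Sum>j\<in>UNIV. v $ j * Du j k)"
      unfolding a_k by (simp add: algebra_simps)
  qed
  also have "\<dots> = - (\<tau> \<bullet> p) - (\<Sum>k\<in>UNIV. \<tau> $ k * (\<Sum>j\<in>UNIV. v $ j * Du j k))"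
    by (simp add: inner_vec_def sum_subtractf sum_negf)
  also have "\<dots> = - (\<tau> \<bullet> p) - (\<Sum>j\<in>UNIV. v $ j * (\<Sum>k\<in>UNIV. \<tau> $ k * Du j k))"
    unfolding sum_distrib_left by (subst sum.swap) (simp add: mult.left_commute)
  finally show ?thesis using tangential by simp
qed

lemma smooth_multiply_connected_domain_boundary_curve:
  assumes "smooth_multiply_connected_domain \<Omega> N \<gamma>" "i \<le> N"
  shows "smooth_on UNIV (\<gamma> i)" "\<gamma> i 1 = \<gamma> i 0" "range (\<gamma> i) \<subseteq> frontier \<Omega>"
proof -
  have "smooth_closed_curve (\<gamma> i)" and img: "path_image (\<gamma> i) \<subseteq> frontier \<Omega>"
    using assms unfolding smooth_multiply_connected_domain_def by auto
  then have per: "\<And>s. \<gamma> i (s + 1) = \<gamma> i s" and "smooth_on UNIV (\<gamma> i)"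
    unfolding smooth_closed_curve_def by auto
  then show "smooth_on UNIV (\<gamma> i)" "\<gamma> i 1 = \<gamma> i 0"
    using per[of 0] by auto
  show "range (\<gamma> i) \<subseteq> frontier \<Omega>"
    using img periodic_range_eq[of "\<gamma> i", OF per] by (simp add: path_image_def)
qed

lemma alpha_v_component:
  "alpha_v \<alpha> u t x $ k = u t x $ k -
     \<alpha> * (\<Sum>j\<in>UNIV. dderiv (0, axis j 1) (dderiv (0, axis j 1) (\<lambda>(t, x). u t x $ k)) (t, x))"
proof -
  have "pd j (\<lambda>y. u t y $ k) = (\<lambda>y. dderiv (0, axis j 1) (\<lambda>(t, x). u t x $ k) (t, y))" for j
    using pd_eq_dderiv[of j "\<lambda>(t, x). u t x $ k" t] by auto
  then show ?thesis
    by (simp add: alpha_v_def vlap_def lap_def pd_eq_dderiv)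
qed

lemma smooth_on_alpha_v:
  assumes U: "open U" and u: "smooth_on U (\<lambda>(t, x). u t x)"
  shows "smooth_on U (\<lambda>(t, x). alpha_v \<alpha> u t x)"
  unfolding smooth_on_vec_iff
proof
  fix k
  define F where "F = (\<lambda>(t, x). u t x $ k)"
  define D where "D j = dderiv (0, axis j 1) (dderiv (0, axis j 1) F)" for j :: 2
  have F: "smooth_scalar_on U F"
    using u by (simp add: smooth_on_vec_iff F_def case_prod_unfold)
  have D: "smooth_scalar_on U (D j)" for j
    unfolding D_def by (intro smooth_scalar_on_dderiv F space_axis_in_Basis)
  have "smooth_scalar_on U (\<lambda>p. 1 * F p + (- \<alpha>) * (1 * D 1 p + 1 * D 2 p))"
    by (intro smooth_scalar_on_lincomb U F D)
  moreover have "(\<lambda>p. 1 * F p + (- \<alpha>) * (1 * D 1 p + 1 * D 2 p)) = (\<lambda>(t, x). alpha_v \<alpha> u t x $ k)"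
    by (auto simp: alpha_v_component sum_2 F_def D_def)
  ultimately show "smooth_scalar_on U (\<lambda>p. (case p of (t, x) \<Rightarrow> alpha_v \<alpha> u t x) $ k)"
    by (simp add: case_prod_unfold)
qed

lemma alpha_euler_solution_smooth:
  assumes "alpha_euler_solution \<alpha> \<Omega> T u \<pi>"
  obtains U where "open U" "{0..T} \<times> closure \<Omega> \<subseteq> U"
    "smooth_on U (\<lambda>(t, x). u t x)" "smooth_on U (\<lambda>(t, x). alpha_v \<alpha> u t x)"
    "smooth_scalar_on U (\<lambda>(t, x). \<pi> t x)"
  using assms smooth_on_alpha_v unfolding alpha_euler_solution_def smooth_on_real_iff by blast

lemma alpha_euler_momentum_on_closure:
  assumes sol: "alpha_euler_solution \<alpha> \<Omega> T u \<pi>" and t: "t \<in> {0<..<T}" and x: "x \<in> closure \<Omega>"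
  shows "pdt (\<lambda>s y. alpha_v \<alpha> u s y $ k) t x
        + (\<Sum>j\<in>UNIV. u t x $ j * pd j (\<lambda>y. alpha_v \<alpha> u t y $ k) x)
        + (\<Sum>j\<in>UNIV. alpha_v \<alpha> u t x $ j * pd k (\<lambda>y. u t y $ j) x)
        = - pd k (\<pi> t) x"
proof -
  obtain U where U: "{0..T} \<times> closure \<Omega> \<subseteq> U"
    and u: "smooth_on U (\<lambda>(t, x). u t x)" and v: "smooth_on U (\<lambda>(t, x). alpha_v \<alpha> u t x)"
    and p: "smooth_scalar_on U (\<lambda>(t, x). \<pi> t x)"
    using alpha_euler_solution_smooth[OF sol] by blast
  define R where "R t x = pdt (\<lambda>s y. alpha_v \<alpha> u s y $ k) t x
        + (\<Sum>j\<in>UNIV. u t x $ j * pd j (\<lambda>y. alpha_v \<alpha> u t y $ k) x)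
        + (\<Sum>j\<in>UNIV. alpha_v \<alpha> u t x $ j * pd k (\<lambda>y. u t y $ j) x)
        + pd k (\<pi> t) x" for t x
  have uj: "smooth_scalar_on U (\<lambda>(t, x). u t x $ j)" and vj: "smooth_scalar_on U (\<lambda>(t, x). alpha_v \<alpha> u t x $ j)" for j
    using u v by (simp_all add: smooth_on_vec_iff case_prod_unfold)
  note [continuous_intros] = smooth_scalar_on_imp_continuous_on[OF uj, unfolded case_prod_unfold]
    smooth_scalar_on_imp_continuous_on[OF vj, unfolded case_prod_unfold]
    smooth_scalar_on_imp_continuous_on[OF smooth_scalar_on_pd[OF uj], simplified, unfolded case_prod_unfold]
    smooth_scalar_on_imp_continuous_on[OF smooth_scalar_on_pd[OF vj], simplified, unfolded case_prod_unfold]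
    smooth_scalar_on_imp_continuous_on[OF smooth_scalar_on_pdt[OF vj], simplified, unfolded case_prod_unfold]
    smooth_scalar_on_imp_continuous_on[OF smooth_scalar_on_pd[OF p], simplified, unfolded case_prod_unfold]
  have "continuous_on U (\<lambda>p. R (fst p) (snd p))"
    unfolding R_def by (intro continuous_intros)
  then have "continuous_on (closure \<Omega>) (\<lambda>y. R t y)"
    by (rule continuous_on_slice[where G="\<lambda>p. R (fst p) (snd p)", simplified]) (use U t in auto)
  moreover have "R t y = 0" if "y \<in> \<Omega>" for y
    using sol t that unfolding alpha_euler_solution_def R_def by auto
  ultimately have "R t x = 0"
    using x by (rule continuous_constant_on_closure)
  then show ?thesis
    unfolding R_def by linarith
qed

lemma alpha_euler_boundary_balance:
  assumes sol: "alpha_euler_solution \<alpha> \<Omega> T u \<pi>" and t: "t \<in> {0<..<T}" and x: "x \<in> frontier \<Omega>"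
    and tangential: "\<And>j. \<tau> \<bullet> grad (\<lambda>y. u t y $ j) x = 0"
  shows "(\<chi> k. pdt (\<lambda>s y. alpha_v \<alpha> u s y $ k) t x) \<bullet> \<tau> = - (\<tau> \<bullet> grad (\<pi> t) x)"
proof (rule inner_tangential_balance)
  have "x \<in> closure \<Omega>" and "u t x = 0"
    using sol t x by (auto simp: alpha_euler_solution_def frontier_def)
  then show "(\<chi> k. pdt (\<lambda>s y. alpha_v \<alpha> u s y $ k) t x) $ k
      + (\<Sum>j\<in>UNIV. alpha_v \<alpha> u t x $ j * pd k (\<lambda>y. u t y $ j) x) = - grad (\<pi> t) x $ k" for k
    using alpha_euler_momentum_on_closure[OF sol t, of x k] by (simp add: grad_def)
  show "(\<Sum>k\<in>UNIV. \<tau> $ k * pd k (\<lambda>y. u t y $ j) x) = 0" for j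
    using tangential[of j] by (simp add: grad_def inner_vec_def)
qed

lemma circulation_pdt_alpha_v_eq_0:
  assumes sol: "alpha_euler_solution \<alpha> \<Omega> T u \<pi>" and t: "t \<in> {0<..<T}"
    and \<Gamma>: "smooth_on UNIV \<Gamma>" "\<Gamma> 1 = \<Gamma> 0" "range \<Gamma> \<subseteq> frontier \<Omega>"
  shows "circulation (\<lambda>x. \<chi> k. pdt (\<lambda>s y. alpha_v \<alpha> u s y $ k) t x) \<Gamma> = 0"
proof -
  obtain U where U: "open U" "{0..T} \<times> closure \<Omega> \<subseteq> U"
    and u: "smooth_on U (\<lambda>(t, x). u t x)" and p: "smooth_scalar_on U (\<lambda>(t, x). \<pi> t x)"
    using alpha_euler_solution_smooth[OF sol] by blast
  define S where "S = {y. (t, y) \<in> U}"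
  define \<Gamma>' where "\<Gamma>' s = vector_derivative \<Gamma> (at s)" for s
  have S: "open S"
    unfolding S_def by (rule open_slice[OF U(1)])
  have \<Gamma>_S: "range \<Gamma> \<subseteq> S"
    using \<Gamma>(3) U(2) t unfolding S_def by (fastforce simp: frontier_def)
  have \<Gamma>': "(\<Gamma> has_vector_derivative \<Gamma>' s) (at s)" for s
    unfolding \<Gamma>'_def by (rule smooth_curve_vector_derivative(1)[OF \<Gamma>(1)])
  have C1_p: "C1_on S (\<pi> t)"
    using C1_on_slice[OF p, of t] unfolding S_def by simp
  have C1_u: "C1_on S (\<lambda>y. u t y $ j)" for j
    using C1_on_slice[of U "\<lambda>(t, x). u t x $ j" t] u unfolding S_def
    by (simp add: smooth_on_vec_iff case_prod_unfold)
  have "u t (\<Gamma> s) = 0" for s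
    using sol t \<Gamma>(3) unfolding alpha_euler_solution_def by (meson greaterThanLessThan_iff
      atLeastAtMost_iff less_imp_le rangeI subsetD)
  then have "\<Gamma>' s \<bullet> grad (\<lambda>y. u t y $ j) (\<Gamma> s) = 0" for s j
    using \<Gamma>_S by (intro C1_on_tangential_derivative_eq_0[OF S C1_u _ \<Gamma>']) auto
  then have "(\<chi> k. pdt (\<lambda>s y. alpha_v \<alpha> u s y $ k) t (\<Gamma> s)) \<bullet> \<Gamma>' s
      = - (\<Gamma>' s \<bullet> grad (\<pi> t) (\<Gamma> s))" for s
    by (intro alpha_euler_boundary_balance[OF sol t]) (use \<Gamma>(3) in auto)
  then have "circulation (\<lambda>x. \<chi> k. pdt (\<lambda>s y. alpha_v \<alpha> u s y $ k) t x) \<Gamma>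
      = - circulation (grad (\<pi> t)) \<Gamma>"
    unfolding circulation_def \<Gamma>'_def by (simp add: inner_commute)
  also have "\<dots> = 0"
    using circulation_grad_closed_curve[OF S C1_p \<Gamma>(1) \<Gamma>_S \<Gamma>(2)] by simp
  finally show ?thesis .
qed

theorem lemma2p3:
  fixes \<Omega> :: "(real^2) set" and N :: nat and \<gamma> :: "nat \<Rightarrow> real \<Rightarrow> real^2"
    and \<alpha> T :: real and u :: "real \<Rightarrow> real^2 \<Rightarrow> real^2" and \<pi> :: "real \<Rightarrow> real^2 \<Rightarrow> real"
  assumes "smooth_multiply_connected_domain \<Omega> N \<gamma>"
    and "\<alpha> > 0"
    and "alpha_euler_solution \<alpha> \<Omega> T u \<pi>"
    and "i \<in> {1..N}"
    and "t \<in> {0..T}"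
  shows "circulation (alpha_v \<alpha> u t) (\<gamma> i) = circulation (alpha_v \<alpha> u 0) (\<gamma> i)"
proof -
  obtain U where U: "{0..T} \<times> closure \<Omega> \<subseteq> U" and v: "smooth_on U (\<lambda>(t, x). alpha_v \<alpha> u t x)"
    using alpha_euler_solution_smooth[OF assms(3)] by blast
  note \<Gamma> = smooth_multiply_connected_domain_boundary_curve[OF assms(1), of i]
  have \<Gamma>_U: "(t', \<gamma> i s) \<in> U" if "t' \<in> {0..T}" for t' s
    using \<Gamma>(3) assms(4) U that by (fastforce simp: frontier_def)
  show ?thesis
  proof (rule has_field_derivative_zero_interior_const[OF _ _ assms(5)])
    show "((\<lambda>t. circulation (alpha_v \<alpha> u t) (\<gamma> i)) has_field_derivative
        circulation (\<lambda>x. \<chi> k. pdt (\<lambda>s y. alpha_v \<alpha> u s y $ k) t' x) (\<gamma> i)) (at t' within {0..T})"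
      if "t' \<in> {0..T}" for t'
      using \<Gamma>(1) assms(4) by (intro has_field_derivative_circulation[OF v _ \<Gamma>_U that]) auto
    show "circulation (\<lambda>x. \<chi> k. pdt (\<lambda>s y. alpha_v \<alpha> u s y $ k) t' x) (\<gamma> i) = 0"
      if "t' \<in> {0<..<T}" for t'
      using \<Gamma> assms(4) by (intro circulation_pdt_alpha_v_eq_0[OF assms(3) that]) auto
  qed
qed

end
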